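(* Let $(I,\preceq)$ be a finite poset with $|I|=n$. For each $i\in I$ let $X_i$ be a finite set with $|X_i|\geq 2$, and let $P_i=(p_i(x_i,y_i))_{x_i,y_i\in X_i}$ be an arbitrary Markov chain (stochastic matrix) on $X_i$. Let $\{p_i^0\}_{i\in I}$ be a strict probability measure on $I$, and let $\mathcal{P}$ be the generalized crested product of the $P_i$ defined by $(I,\preceq)$ and $\{p_i^0\}$. Let $R\subseteq I$, and let $\mathcal{L}=\{L_1,\ldots,L_t\}$ be the partition of $X=\prod_{i\in I}X_i$ into the classes of the equivalence relation $x\sim y \iff x_i=y_i$ for all $i\in I\setminus R$. Then $\mathcal{P}$ is lumpable with respect to $\mathcal{L}$, i.e. for all $k,s\in\{1,\ldots,t\}$ the function $x\mapsto \mathcal{P}(x,L_s)=\sum_{y\in L_s}p(x,y)$ is constant on $L_k$.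
   Context: For $i\in I$, $H(i)=\{j\in I: j\prec i\}$ and $H[i]=H(i)\sqcup\{i\}$. A strict probability measure on $I$ means $p_i^0>0$ for all $i$ and $\sum_i p_i^0=1$. The generalized crested product is the Markov chain on $X=\prod_{i\in I}X_i$ with transition probabilities $$p(x,y)=\sum_{i\in I}p_i^0\,p_i(x_i,y_i)\prod_{j\in H(i)}\frac{1}{|X_j|}\prod_{j\notin H[i]}\delta(x_j,y_j),$$ where $\delta$ is the Kronecker delta; equivalently its operator is $\sum_{i\in I}p_i^0\,P_i\otimes(\bigotimes_{j\in H(i)}U_j)\otimes(\bigotimes_{j\notin H[i]}I_j)$ with $U_j$ the uniform operator (all entries $1/|X_j|$) and $I_j$ the identity on $X_j$. A Markov chain with transition matrix $p$ on a finite set $X$ is lumpable with respect to a partition $\{L_1,\dots,L_t\}$ of $X$ if for all $k,s$ the map $x\mapsto\sum_{y\in L_s}p(x,y)$ is constant on $L_k$. *)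

theory Defs
  imports Complex_Main "HOL-Library.FuncSet"
begin

definition below :: "'i set \<Rightarrow> ('i \<Rightarrow> 'i \<Rightarrow> bool) \<Rightarrow> 'i \<Rightarrow> 'i set" where
  "below I le i = {j \<in> I. le j i \<and> j \<noteq> i}"

definition crested_product ::
  "'i set \<Rightarrow> ('i \<Rightarrow> 'i \<Rightarrow> bool) \<Rightarrow> ('i \<Rightarrow> 'a set) \<Rightarrow> ('i \<Rightarrow> 'a \<Rightarrow> 'a \<Rightarrow> real)
    \<Rightarrow> ('i \<Rightarrow> real) \<Rightarrow> ('i \<Rightarrow> 'a) \<Rightarrow> ('i \<Rightarrow> 'a) \<Rightarrow> real" where
  "crested_product I le X P p0 x y =
     (\<Sum>i\<in>I. p0 i * P i (x i) (y i)
        * (\<Prod>j\<in>below I le i. 1 / real (card (X j)))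
        * (\<Prod>j\<in>I - insert i (below I le i). if x j = y j then 1 else 0))"

definition lumpable :: "('s \<Rightarrow> 's \<Rightarrow> real) \<Rightarrow> 's set set \<Rightarrow> bool" where
  "lumpable p Ls \<longleftrightarrow>
     (\<forall>Lk\<in>Ls. \<forall>Ls'\<in>Ls. \<forall>x\<in>Lk. \<forall>x'\<in>Lk. (\<Sum>y\<in>Ls'. p x y) = (\<Sum>y\<in>Ls'. p x' y))"

definition agree_off :: "'i set \<Rightarrow> ('i \<Rightarrow> 'a set) \<Rightarrow> 'i set \<Rightarrow> (('i \<Rightarrow> 'a) \<times> ('i \<Rightarrow> 'a)) set" where
  "agree_off I X R = {(x, y). x \<in> PiE I X \<and> y \<in> PiE I X \<and> (\<forall>i\<in>I - R. x i = y i)}"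

end

theory Submission
  imports Defs
begin

text \<open>The crested product is a mixture, over \<open>i \<in> I\<close>, of product kernels \<open>\<Otimes>\<^sub>j Q\<^sub>i\<^sub>j\<close> whose
  factors are \<open>P\<^sub>i\<close>, uniform or identity kernels, hence all stochastic. Summing a product kernel
  over a class of \<open>agree_off I X R\<close>, which is a box with free coordinates \<open>R\<close> and fixed coordinates
  \<open>I - R\<close>, factorises into row sums of the factors: on \<open>R\<close> these are \<open>1\<close>, and off \<open>R\<close> they only
  depend on the coordinates that are shared by all points of a class.\<close>

definition crested_factor ::
  "'i set \<Rightarrow> ('i \<Rightarrow> 'i \<Rightarrow> bool) \<Rightarrow> ('i \<Rightarrow> 'a set) \<Rightarrow> ('i \<Rightarrow> 'a \<Rightarrow> 'a \<Rightarrow> real)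
    \<Rightarrow> 'i \<Rightarrow> 'i \<Rightarrow> 'a \<Rightarrow> 'a \<Rightarrow> real" where
  "crested_factor I le X P i j a b =
     (if j = i then P i a b
      else if j \<in> below I le i then 1 / real (card (X j))
      else if a = b then 1 else 0)"

lemma crested_product_eq_mixture:
  assumes "finite I"
  shows "crested_product I le X P p0 x y =
    (\<Sum>i\<in>I. p0 i * (\<Prod>j\<in>I. crested_factor I le X P i j (x j) (y j)))"
  unfolding crested_product_def
proof (rule sum.cong)
  fix i assume i: "i \<in> I"
  let ?H = "below I le i"
  let ?Q = "\<lambda>j. crested_factor I le X P i j (x j) (y j)"
  have H_sub: "insert i ?H \<subseteq> I" and i_notin_H: "i \<notin> ?H" and fin_H: "finite ?H"
    using i assms by (auto simp: below_def)
  have "(\<Prod>j\<in>I. ?Q j) = (\<Prod>j\<in>I - insert i ?H. ?Q j) * (\<Prod>j\<in>insert i ?H. ?Q j)"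
    by (rule prod.subset_diff[OF H_sub assms])
  also have "(\<Prod>j\<in>insert i ?H. ?Q j) = P i (x i) (y i) * (\<Prod>j\<in>?H. 1 / real (card (X j)))"
    using i_notin_H fin_H by (auto simp: crested_factor_def intro!: prod.cong)
  also have "(\<Prod>j\<in>I - insert i ?H. ?Q j) = (\<Prod>j\<in>I - insert i ?H. if x j = y j then 1 else 0)"
    by (rule prod.cong) (auto simp: crested_factor_def)
  finally show "p0 i * P i (x i) (y i) * (\<Prod>j\<in>?H. 1 / real (card (X j)))
      * (\<Prod>j\<in>I - insert i ?H. if x j = y j then 1 else 0) = p0 i * (\<Prod>j\<in>I. ?Q j)"
    by (simp add: algebra_simps)
qed simp

lemma crested_factor_row_sum:
  assumes "finite (X j)" "card (X j) > 0" "a \<in> X j"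
    and "j = i \<Longrightarrow> (\<Sum>b\<in>X i. P i a b) = 1"
  shows "(\<Sum>b\<in>X j. crested_factor I le X P i j a b) = 1"
proof -
  consider "j = i" | "j \<noteq> i" "j \<in> below I le i" | "j \<noteq> i" "j \<notin> below I le i"
    by blast
  then show ?thesis
    by cases (use assms in \<open>auto simp: crested_factor_def sum.delta\<close>)
qed

lemma agree_off_class:
  assumes "w \<in> PiE I X"
  shows "agree_off I X R `` {w} = PiE I (\<lambda>j. if j \<in> R then X j else {w j})"
  using assms unfolding agree_off_def
  by (auto simp: PiE_def Pi_def extensional_def split: if_splits)

lemma sum_PiE_mixture_of_products:
  fixes c :: "'k \<Rightarrow> 'b::comm_semiring_1"
  assumes "finite I" "\<And>j. j \<in> I \<Longrightarrow> finite (D j)"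
  shows "(\<Sum>y\<in>PiE I D. \<Sum>k\<in>K. c k * (\<Prod>j\<in>I. Q k j (x j) (y j))) =
    (\<Sum>k\<in>K. c k * (\<Prod>j\<in>I. \<Sum>b\<in>D j. Q k j (x j) b))"
proof -
  have "(\<Sum>y\<in>PiE I D. \<Sum>k\<in>K. c k * (\<Prod>j\<in>I. Q k j (x j) (y j))) =
      (\<Sum>k\<in>K. c k * (\<Sum>y\<in>PiE I D. \<Prod>j\<in>I. Q k j (x j) (y j)))"
    unfolding sum_distrib_left by (rule sum.swap)
  also have "\<dots> = (\<Sum>k\<in>K. c k * (\<Prod>j\<in>I. \<Sum>b\<in>D j. Q k j (x j) b))"
    by (simp add: prod_sum_PiE[OF assms])
  finally show ?thesis .
qed

lemma lumpable_mixture_of_products: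
  assumes finI: "finite I" and finX: "\<And>j. j \<in> I \<Longrightarrow> finite (X j)"
    and row_sum: "\<And>k j a a'. j \<in> I \<Longrightarrow> j \<in> R \<Longrightarrow> a \<in> X j \<Longrightarrow> a' \<in> X j \<Longrightarrow>
      (\<Sum>b\<in>X j. Q k j a b) = (\<Sum>b\<in>X j. Q k j a' b)"
  shows "lumpable (\<lambda>x y. \<Sum>k\<in>K. c k * (\<Prod>j\<in>I. Q k j (x j) (y j))) (PiE I X // agree_off I X R)"
  unfolding lumpable_def
proof (intro ballI)
  fix L L' x x'
  assume "L \<in> PiE I X // agree_off I X R" "L' \<in> PiE I X // agree_off I X R" "x \<in> L" "x' \<in> L"
  then obtain z w where "z \<in> PiE I X" "w \<in> PiE I X"
    and L: "L = agree_off I X R `` {z}" and L': "L' = agree_off I X R `` {w}"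
    by (auto simp: quotient_def)
  define D where "D = (\<lambda>j. if j \<in> R then X j else {w j})"
  have x: "x \<in> PiE I X" "x' \<in> PiE I X" and agree: "\<And>j. j \<in> I - R \<Longrightarrow> x j = x' j"
    using \<open>x \<in> L\<close> \<open>x' \<in> L\<close> by (auto simp: L agree_off_def)
  have "(\<Sum>b\<in>D j. Q k j (x j) b) = (\<Sum>b\<in>D j. Q k j (x' j) b)" if "j \<in> I" for k j
    using that x agree row_sum[of j "x j" "x' j" k] by (cases "j \<in> R") (auto simp: D_def)
  moreover have "L' = PiE I D"
    using \<open>w \<in> PiE I X\<close> by (simp add: L' D_def agree_off_class)
  moreover have "\<And>j. j \<in> I \<Longrightarrow> finite (D j)"
    using finX by (simp add: D_def)
  ultimately show "(\<Sum>y\<in>L'. \<Sum>k\<in>K. c k * (\<Prod>j\<in>I. Q k j (x j) (y j))) =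
      (\<Sum>y\<in>L'. \<Sum>k\<in>K. c k * (\<Prod>j\<in>I. Q k j (x' j) (y j)))"
    by (simp add: sum_PiE_mixture_of_products[OF finI])
qed

theorem theorem3:
  fixes I :: "'i set" and le :: "'i \<Rightarrow> 'i \<Rightarrow> bool"
    and X :: "'i \<Rightarrow> 'a set" and P :: "'i \<Rightarrow> 'a \<Rightarrow> 'a \<Rightarrow> real"
    and p0 :: "'i \<Rightarrow> real" and R :: "'i set"
  assumes finI: "finite I"
    and refl: "\<And>i. i \<in> I \<Longrightarrow> le i i"
    and antisym: "\<And>i j. i \<in> I \<Longrightarrow> j \<in> I \<Longrightarrow> le i j \<Longrightarrow> le j i \<Longrightarrow> i = j"
    and trans: "\<And>i j k. i \<in> I \<Longrightarrow> j \<in> I \<Longrightarrow> k \<in> I \<Longrightarrow> le i j \<Longrightarrow> le j k \<Longrightarrow> le i k"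
    and finX: "\<And>i. i \<in> I \<Longrightarrow> finite (X i)"
    and cardX: "\<And>i. i \<in> I \<Longrightarrow> card (X i) \<ge> 2"
    and P_nonneg: "\<And>i a b. i \<in> I \<Longrightarrow> a \<in> X i \<Longrightarrow> b \<in> X i \<Longrightarrow> P i a b \<ge> 0"
    and P_stoch: "\<And>i a. i \<in> I \<Longrightarrow> a \<in> X i \<Longrightarrow> (\<Sum>b\<in>X i. P i a b) = 1"
    and p0_pos: "\<And>i. i \<in> I \<Longrightarrow> p0 i > 0"
    and p0_sum: "(\<Sum>i\<in>I. p0 i) = 1"
    and R_sub: "R \<subseteq> I"
  shows "lumpable (crested_product I le X P p0) (PiE I X // agree_off I X R)"
proof -
  have "crested_product I le X P p0 =
      (\<lambda>x y. \<Sum>i\<in>I. p0 i * (\<Prod>j\<in>I. crested_factor I le X P i j (x j) (y j)))"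
    by (intro ext crested_product_eq_mixture[OF finI])
  moreover have "(\<Sum>b\<in>X j. crested_factor I le X P i j a b) = 1"
    if "j \<in> I" "a \<in> X j" for i j a
    using that finX cardX[of j] P_stoch by (intro crested_factor_row_sum) auto
  ultimately show ?thesis
    using lumpable_mixture_of_products[OF finI finX,
        where Q = "crested_factor I le X P" and K = I and c = p0] by simp
qed

end
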